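(* Let $\mathscr{H}$ be a complex Hilbert space with $\dim\mathscr{H}>1$, let $\mathscr{A}$ be a $C^*$-algebra with $\mathbb{K}(\mathscr{H})\subseteq\mathscr{A}\subseteq\mathbb{B}(\mathscr{H})$, and let $\mathscr{E}$ be a full Hilbert $\mathscr{A}$-module. Let $S:\mathscr{E}\to\mathscr{E}$ be a nonzero bounded linear mapping satisfying $$|\langle Sx,Sy\rangle|=\|S\|^2\,|\langle x,y\rangle|\qquad(x,y\in\mathscr{E}).$$ Let $c\in\mathscr{A}$ with $\|c\|<1$, $\delta\in[0,1-\|c\|)$ and $\theta\in[0,1)$. If $T:\mathscr{E}\to\mathscr{E}$ is a linear mapping with $\|T-S\|\leq\theta\|S\|$, then $T$ is $(\delta,\varepsilon,c)$-angle preserving, where $$\varepsilon=\frac{\theta^2+2\theta+\delta+(\theta^2-2\theta+2)\|c\|}{(1-\theta)^2}.$$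
   Context: $\mathbb{B}(\mathscr{H})$ denotes the bounded operators and $\mathbb{K}(\mathscr{H})$ the compact operators on $\mathscr{H}$. A Hilbert $\mathscr{A}$-module is a right $\mathscr{A}$-module $\mathscr{E}$ with an $\mathscr{A}$-valued inner product $\langle\cdot,\cdot\rangle$ ($\mathbb{C}$-linear and $\mathscr{A}$-linear in the second variable, $\langle x,y\rangle^*=\langle y,x\rangle$, $\langle x,x\rangle\geq0$ with equality iff $x=0$) that is complete in the norm $\|x\|=\|\langle x,x\rangle\|^{1/2}$; it is full if the closed linear span of $\{\langle x,y\rangle:x,y\in\mathscr{E}\}$ is $\mathscr{A}$. For $a\in\mathscr{A}$, $|a|=(a^*a)^{1/2}$. For $\delta\geq0$ and $c\in\mathscr{A}$ with $\|c\|<1$, write $x\angle_c^\delta y$ if $\big\|\langle x,y\rangle-\|x\|\,\|y\|\,c\big\|\leq\delta\|x\|\,\|y\|$. A mapping $T:\mathscr{E}\to\mathscr{F}$ is $(\delta,\varepsilon,c)$-angle preserving if $x\angle_c^\delta y$ implies $Tx\angle_c^\varepsilon Ty$ for all $x,y\in\mathscr{E}$. *)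

theory Defs
  imports "HOL-Analysis.Analysis"
begin

class complex_vector = real_vector +
  fixes scaleC :: "complex \<Rightarrow> 'a \<Rightarrow> 'a" (infixr \<open>*\<^sub>C\<close> 75)
  assumes scaleC_add_right: "scaleC a (x + y) = scaleC a x + scaleC a y"
    and scaleC_add_left: "scaleC (a + b) x = scaleC a x + scaleC b x"
    and scaleC_scaleC: "scaleC a (scaleC b x) = scaleC (a * b) x"
    and scaleC_one: "scaleC 1 x = x"
    and scaleR_scaleC: "scaleR r x = scaleC (complex_of_real r) x"

class complex_inner = complex_vector + real_normed_vector +
  fixes cinner :: "'a \<Rightarrow> 'a \<Rightarrow> complex"
  assumes cinner_commute: "cinner x y = cnj (cinner y x)"
    and cinner_add_right: "cinner x (y + z) = cinner x y + cinner x z"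
    and cinner_scaleC_right: "cinner x (scaleC a y) = a * cinner x y"
    and cinner_self_nonneg: "Im (cinner x x) = 0 \<and> 0 \<le> Re (cinner x x)"
    and cinner_self_zero: "cinner x x = 0 \<longleftrightarrow> x = 0"
    and norm_eq_sqrt_cinner: "norm x = sqrt (Re (cinner x x))"

text \<open>Complex Hilbert space = complete complex inner product space;
  used as the sort complex_inner + complete_space.\<close>

definition clinear :: "('a::complex_vector \<Rightarrow> 'b::complex_vector) \<Rightarrow> bool" where
  "clinear f \<longleftrightarrow> (\<forall>x y. f (x + y) = f x + f y) \<and> (\<forall>c x. f (scaleC c x) = scaleC c (f x))"

definition bounded_clinear ::
  "('a::{complex_vector,real_normed_vector} \<Rightarrow> 'b::{complex_vector,real_normed_vector}) \<Rightarrow> bool" where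
  "bounded_clinear f \<longleftrightarrow> clinear f \<and> (\<exists>K. \<forall>x. norm (f x) \<le> norm x * K)"

definition cadjoint :: "('h::complex_inner \<Rightarrow> 'h) \<Rightarrow> ('h \<Rightarrow> 'h)" where
  "cadjoint f = (SOME g. \<forall>x y. cinner (f x) y = cinner x (g y))"

definition compact_op :: "('h::complex_inner \<Rightarrow> 'h) \<Rightarrow> bool" where
  "compact_op f \<longleftrightarrow> bounded_clinear f \<and> compact (closure (f ` ball 0 1))"

definition positive_op :: "('h::complex_inner \<Rightarrow> 'h) \<Rightarrow> bool" where
  "positive_op a \<longleftrightarrow> bounded_clinear a \<and>
     (\<forall>x. Im (cinner x (a x)) = 0 \<and> 0 \<le> Re (cinner x (a x)))"

definition op_sqrt :: "('h::complex_inner \<Rightarrow> 'h) \<Rightarrow> ('h \<Rightarrow> 'h)" where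
  "op_sqrt a = (THE b. positive_op b \<and> b \<circ> b = a)"

definition op_abs :: "('h::complex_inner \<Rightarrow> 'h) \<Rightarrow> ('h \<Rightarrow> 'h)" where
  "op_abs a = op_sqrt (cadjoint a \<circ> a)"

definition cstar_subalgebra :: "('h::complex_inner \<Rightarrow> 'h) set \<Rightarrow> bool" where
  "cstar_subalgebra A \<longleftrightarrow>
     A \<subseteq> {f. bounded_clinear f} \<and>
     (\<lambda>_. 0) \<in> A \<and>
     (\<forall>a\<in>A. \<forall>b\<in>A. (\<lambda>h. a h + b h) \<in> A) \<and>
     (\<forall>a\<in>A. \<forall>c. (\<lambda>h. scaleC c (a h)) \<in> A) \<and>
     (\<forall>a\<in>A. \<forall>b\<in>A. a \<circ> b \<in> A) \<and>
     (\<forall>a\<in>A. cadjoint a \<in> A) \<and>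
     (\<forall>a. bounded_clinear a \<and> (\<forall>e>0. \<exists>b\<in>A. onorm (\<lambda>h. a h - b h) < e) \<longrightarrow> a \<in> A)"

text \<open>The module is a complex vector space of type 'e, with right action
  act x a (= x a) and A-valued inner product ip x y (= <x,y>); its norm
  (the type's norm) is required to be the one induced by the inner product,
  and completeness is the sort constraint banach on 'e.\<close>
definition hilbert_module ::
  "('h::complex_inner \<Rightarrow> 'h) set \<Rightarrow> ('e::{complex_vector,banach} \<Rightarrow> ('h \<Rightarrow> 'h) \<Rightarrow> 'e)
     \<Rightarrow> ('e \<Rightarrow> 'e \<Rightarrow> ('h \<Rightarrow> 'h)) \<Rightarrow> bool" where
  "hilbert_module A act ip \<longleftrightarrow>
     (\<forall>x y. \<forall>a\<in>A. act (x + y) a = act x a + act y a) \<and>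
     (\<forall>x. \<forall>a\<in>A. \<forall>b\<in>A. act x (\<lambda>h. a h + b h) = act x a + act x b) \<and>
     (\<forall>x c. \<forall>a\<in>A. act (scaleC c x) a = scaleC c (act x a)) \<and>
     (\<forall>x c. \<forall>a\<in>A. act x (\<lambda>h. scaleC c (a h)) = scaleC c (act x a)) \<and>
     (\<forall>x. \<forall>a\<in>A. \<forall>b\<in>A. act x (a \<circ> b) = act (act x a) b) \<and>
     (\<forall>x y. ip x y \<in> A) \<and>
     (\<forall>x y z. ip x (y + z) = (\<lambda>h. ip x y h + ip x z h)) \<and>
     (\<forall>x y c. ip x (scaleC c y) = (\<lambda>h. scaleC c (ip x y h))) \<and>
     (\<forall>x y. \<forall>a\<in>A. ip x (act y a) = ip x y \<circ> a) \<and>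
     (\<forall>x y. cadjoint (ip x y) = ip y x) \<and>
     (\<forall>x. positive_op (ip x x)) \<and>
     (\<forall>x. ip x x = (\<lambda>_. 0) \<longleftrightarrow> x = 0) \<and>
     (\<forall>x. norm x = sqrt (onorm (ip x x)))"

definition full_module ::
  "('h::complex_inner \<Rightarrow> 'h) set \<Rightarrow> ('e \<Rightarrow> 'e \<Rightarrow> ('h \<Rightarrow> 'h)) \<Rightarrow> bool" where
  "full_module A ip \<longleftrightarrow>
     (\<forall>a\<in>A. \<forall>e>0. \<exists>n (xs::nat \<Rightarrow> 'e) ys (cs::nat \<Rightarrow> complex).
        onorm (\<lambda>h. a h - (\<Sum>i<n. scaleC (cs i) (ip (xs i) (ys i) h))) < e)"

definition angle_rel ::
  "('e::real_normed_vector \<Rightarrow> 'e \<Rightarrow> ('h::complex_inner \<Rightarrow> 'h)) \<Rightarrow> ('h \<Rightarrow> 'h) \<Rightarrow> real \<Rightarrow> 'e \<Rightarrow> 'e \<Rightarrow> bool" where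
  "angle_rel ip c \<delta> x y \<longleftrightarrow>
     onorm (\<lambda>h. ip x y h - (norm x * norm y) *\<^sub>R c h) \<le> \<delta> * norm x * norm y"

definition angle_preserving ::
  "('e::real_normed_vector \<Rightarrow> 'e \<Rightarrow> ('h::complex_inner \<Rightarrow> 'h)) \<Rightarrow> real \<Rightarrow> real \<Rightarrow> ('h \<Rightarrow> 'h)
     \<Rightarrow> ('e \<Rightarrow> 'e) \<Rightarrow> bool" where
  "angle_preserving ip \<delta> \<epsilon> c T \<longleftrightarrow>
     (\<forall>x y. angle_rel ip c \<delta> x y \<longrightarrow> angle_rel ip c \<epsilon> (T x) (T y))"

end

theory Submission
  imports Defs
begin

(*
  Put x = y in the hypothesis on S. The inner product <x,x> is a positive operator, and a
  positive operator is its own modulus because positive square roots are unique; hence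
  <Sx,Sx> = ||S||^2 <x,x>, and polarization gives <Sx,Sy> = ||S||^2 <x,y>, so S is ||S|| times
  an isometry. If x and y make angle c up to delta, split
    <Tx,Ty> - ||Tx|| ||Ty|| c = (<Tx,Ty> - <Sx,Sy>) + ||S||^2 (<x,y> - ||x|| ||y|| c) + (m - t) c
  with m = ||S||^2 ||x|| ||y|| and t = ||Tx|| ||Ty||. The module Cauchy--Schwarz inequality
  ||<u,v>|| <= ||u|| ||v|| bounds the first term by (theta^2 + 2 theta) m, the hypothesis bounds
  the second by delta m, and the lower bound (1 - theta)^2 m <= t turns the sum of these and of
  |m - t| ||c|| into epsilon t.
*)

interpretation scaleC: vector_space "scaleC :: complex \<Rightarrow> 'a::complex_vector \<Rightarrow> 'a"
  by unfold_locales (simp_all add: scaleC_add_right scaleC_add_left scaleC_scaleC scaleC_one)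

lemma cinner_add_left: "cinner (x + y) z = cinner x z + cinner y (z::'a::complex_inner)"
  by (metis cinner_add_right cinner_commute complex_cnj_add)

lemma cinner_scaleC_left: "cinner (a *\<^sub>C x) y = cnj a * cinner x (y::'a::complex_inner)"
  by (metis cinner_commute cinner_scaleC_right complex_cnj_mult)

lemma cinner_zero_left [simp]: "cinner 0 (x::'a::complex_inner) = 0"
  using cinner_scaleC_left[of 0 0 x] by simp

lemma cinner_zero_right [simp]: "cinner x (0::'a::complex_inner) = 0"
  using cinner_scaleC_right[of x 0 0] by simp

lemma cinner_diff_right: "cinner x (y - z) = cinner x y - cinner x (z::'a::complex_inner)"
  by (metis cinner_add_right eq_diff_eq)

lemma cinner_diff_left: "cinner (x - y) z = cinner x z - cinner y (z::'a::complex_inner)"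
  by (metis cinner_commute cinner_diff_right complex_cnj_diff)

lemma cinner_scaleR_right: "cinner x (r *\<^sub>R y) = of_real r * cinner x (y::'a::complex_inner)"
  by (simp add: scaleR_scaleC cinner_scaleC_right)

lemma cinner_scaleR_left: "cinner (r *\<^sub>R x) y = of_real r * cinner x (y::'a::complex_inner)"
  by (simp add: scaleR_scaleC cinner_scaleC_left)

lemma power2_norm_eq_cinner: "(norm x)\<^sup>2 = Re (cinner x (x::'a::complex_inner))"
  using norm_eq_sqrt_cinner[of x] cinner_self_nonneg[of x] by simp

lemma cinner_self_eq_power2_norm: "cinner x x = of_real ((norm (x::'a::complex_inner))\<^sup>2)"
  using cinner_self_nonneg[of x] by (simp add: power2_norm_eq_cinner complex_eq_iff)

lemma norm_cinner_self: "cmod (cinner x x) = (norm (x::'a::complex_inner))\<^sup>2"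
  by (simp add: cinner_self_eq_power2_norm del: of_real_power)

lemma cinner_eq_imp_eq: "(\<And>g. cinner g x = cinner g y) \<Longrightarrow> x = (y::'a::complex_inner)"
  by (metis cinner_diff_right cinner_self_zero eq_iff_diff_eq_0)

lemma norm_scaleC_unimodular:
  assumes "cnj u * u = 1"
  shows "norm (u *\<^sub>C x) = norm (x::'a::complex_inner)"
proof -
  have "cinner (u *\<^sub>C x) (u *\<^sub>C x) = (cnj u * u) * cinner x x"
    by (simp add: cinner_scaleC_left cinner_scaleC_right)
  then show ?thesis
    using assms by (simp add: norm_eq_sqrt_cinner[of "u *\<^sub>C x"] norm_eq_sqrt_cinner[of x])
qed

lemma parallelogram_law:
  "(norm (x + y))\<^sup>2 + (norm (x - y))\<^sup>2 = 2 * (norm x)\<^sup>2 + 2 * (norm (y::'a::complex_inner))\<^sup>2"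
  by (simp add: power2_norm_eq_cinner cinner_add_left cinner_add_right
      cinner_diff_left cinner_diff_right)

lemma unimodular_rotation:
  fixes w :: complex
  obtains u where "u * w = of_real (cmod w)" "cnj u * u = 1"
proof (cases "w = 0")
  case True
  then show ?thesis by (intro that[of 1]) simp_all
next
  case False
  have "w * cnj w = of_real ((cmod w)\<^sup>2)"
    by (simp add: complex_norm_square[symmetric])
  with False show ?thesis
    by (intro that[of "cnj w / of_real (cmod w)"]) (simp_all add: field_simps power2_eq_square)
qed

section \<open>Cauchy--Schwarz for semi-definite Hermitian forms\<close>

lemma quadratic_nonneg_imp_discriminant_le:
  fixes a b c :: real
  assumes nonneg: "\<And>t. 0 \<le> a - 2 * t * b + t\<^sup>2 * c" and "0 \<le> c"
  shows "b\<^sup>2 \<le> a * c"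
proof (cases "c = 0")
  case True
  have "b = 0"
  proof (rule ccontr)
    assume "b \<noteq> 0"
    then show False
      using nonneg[of "(a + 1) / (2 * b)"] True by simp
  qed
  with True show ?thesis by simp
next
  case False
  with \<open>0 \<le> c\<close> have "c > 0" by simp
  have "0 \<le> (a - 2 * (b / c) * b + (b / c)\<^sup>2 * c) * c"
    using nonneg[of "b / c"] \<open>c > 0\<close> by simp
  also have "\<dots> = a * c - b\<^sup>2"
    using \<open>c > 0\<close> by (simp add: power2_eq_square field_simps)
  finally show ?thesis by simp
qed

lemma hermitian_form_Cauchy_Schwarz:
  fixes F :: "'v::complex_vector \<Rightarrow> 'v \<Rightarrow> complex"
  assumes add: "\<And>x y z. F x (y + z) = F x y + F x z"
    and scale: "\<And>x a y. F x (a *\<^sub>C y) = a * F x y"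
    and herm: "\<And>x y. F x y = cnj (F y x)"
    and nonneg: "\<And>x. 0 \<le> Re (F x x)"
  shows "(cmod (F x y))\<^sup>2 \<le> Re (F x x) * Re (F y y)"
proof -
  have diff: "F v (w - w') = F v w - F v w'" for v w w'
    by (metis add eq_diff_eq)
  have diff_left: "F (w - w') v = F w v - F w' v" for v w w'
    by (metis diff herm complex_cnj_diff)
  have scale_left: "F (a *\<^sub>C w) v = cnj a * F w v" for a v w
    by (metis scale herm complex_cnj_mult)
  have real: "Im (F v v) = 0" for v
    using herm[of v v] by (metis cnj.simps(2) neg_equal_zero)
  obtain u where u: "u * F x y = of_real (cmod (F x y))" "cnj u * u = 1"
    using unimodular_rotation by blast
  have "0 \<le> Re (F x x) - 2 * t * cmod (F x y) + t\<^sup>2 * Re (F y y)" for t :: real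
  proof -
    define z where "z = x - (of_real t * u) *\<^sub>C y"
    \<comment> \<open>the rotation \<open>u\<close> makes both cross terms of \<open>F z z\<close> equal to \<open>t \<bar>F x y\<bar>\<close>\<close>
    have "F z z = F x x - of_real t * (u * F x y) - cnj (of_real t * (u * F x y))
        + of_real (t\<^sup>2) * (cnj u * u) * F y y"
      unfolding z_def using herm[of y x]
      by (simp add: diff diff_left scale scale_left power2_eq_square algebra_simps)
    also have "\<dots> = F x x - of_real (2 * t * cmod (F x y)) + of_real (t\<^sup>2) * F y y"
      using u by simp
    finally show ?thesis
      using nonneg[of z] real[of y] by simp
  qed
  then show ?thesis
    by (rule quadratic_nonneg_imp_discriminant_le[OF _ nonneg])
qed

lemma cinner_Cauchy_Schwarz: "cmod (cinner x y) \<le> norm x * norm (y::'a::complex_inner)"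
proof (rule power2_le_imp_le)
  have "(cmod (cinner x y))\<^sup>2 \<le> Re (cinner x x) * Re (cinner y y)"
    by (rule hermitian_form_Cauchy_Schwarz[OF cinner_add_right cinner_scaleC_right cinner_commute])
      (use cinner_self_nonneg in blast)
  then show "(cmod (cinner x y))\<^sup>2 \<le> (norm x * norm y)\<^sup>2"
    by (simp add: power2_norm_eq_cinner power_mult_distrib)
qed simp

section \<open>Riesz representation and adjoints\<close>

lemma bounded_clinear_add: "bounded_clinear f \<Longrightarrow> f (x + y) = f x + f y"
  by (simp add: bounded_clinear_def clinear_def)

lemma bounded_clinear_scaleC: "bounded_clinear f \<Longrightarrow> f (a *\<^sub>C x) = a *\<^sub>C f x"
  by (simp add: bounded_clinear_def clinear_def)

lemma bounded_clinear_imp_bounded_linear: "bounded_clinear f \<Longrightarrow> bounded_linear f"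
  by (auto simp: bounded_clinear_def clinear_def scaleR_scaleC intro!: bounded_linear_intro)

lemma bounded_clinear_diff: "bounded_clinear f \<Longrightarrow> f (x - y) = f x - f y"
  by (simp add: bounded_clinear_imp_bounded_linear linear_diff bounded_linear.linear)

lemma bounded_clinear_scaleR: "bounded_clinear f \<Longrightarrow> f (r *\<^sub>R x) = r *\<^sub>R f x"
  by (simp add: bounded_clinear_scaleC scaleR_scaleC)

lemma bounded_clinear_bound:
  assumes "bounded_clinear f"
  obtains M where "0 \<le> M" "\<And>x. norm (f x) \<le> M * norm x"
  using bounded_linear.nonneg_bounded[OF bounded_clinear_imp_bounded_linear[OF assms]]
  by (metis mult.commute)

lemma power2_norm_diff_le_if_norm_add_ge:
  fixes x y :: "'a::complex_inner"
  assumes "norm x \<le> 1" "norm y \<le> 1" "2 - \<eta> \<le> norm (x + y)" "0 \<le> \<eta>"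
  shows "(norm (x - y))\<^sup>2 \<le> 4 * \<eta>"
proof -
  have "(norm (x - y))\<^sup>2 \<le> 4 - (norm (x + y))\<^sup>2"
    using parallelogram_law[of x y] power_mono[OF assms(1), of 2] power_mono[OF assms(2), of 2]
    by simp
  also have "\<dots> \<le> 4 * \<eta>"
  proof (cases "norm (x + y) \<le> 2")
    case True
    have "4 - (norm (x + y))\<^sup>2 = (2 - norm (x + y)) * (2 + norm (x + y))"
      by (simp add: power2_eq_square algebra_simps)
    also have "\<dots> \<le> \<eta> * 4"
      using assms(3) True by (intro mult_mono) auto
    finally show ?thesis by simp
  next
    case False
    then have "4 \<le> (norm (x + y))\<^sup>2"
      using power_mono[of 2 "norm (x + y)" 2] by simp
    with assms(4) show ?thesis by simp
  qed
  finally show ?thesis .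
qed

lemma Cauchy_if_norm_add_tendsto_2:
  fixes X :: "nat \<Rightarrow> 'a::complex_inner"
  assumes norm_X: "\<And>n. norm (X n) \<le> 1"
    and add_X: "\<And>m n. 2 - r m - r n \<le> norm (X m + X n)"
    and r_nonneg: "\<And>n. 0 \<le> r n" and r_lim: "r \<longlonglongrightarrow> 0"
  shows "Cauchy X"
proof (rule metric_CauchyI)
  fix e :: real
  assume "e > 0"
  then obtain N where N: "\<And>n. n \<ge> N \<Longrightarrow> r n < e\<^sup>2 / 8"
    using LIMSEQ_D[OF r_lim, of "e\<^sup>2 / 8"] r_nonneg by fastforce
  have "dist (X m) (X n) < e" if "m \<ge> N" "n \<ge> N" for m n
  proof -
    have "(norm (X m - X n))\<^sup>2 \<le> 4 * (r m + r n)"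
      using norm_X add_X r_nonneg by (intro power2_norm_diff_le_if_norm_add_ge) (auto simp: algebra_simps)
    also have "\<dots> < e\<^sup>2"
      using N[OF \<open>m \<ge> N\<close>] N[OF \<open>n \<ge> N\<close>] by simp
    finally show ?thesis
      using \<open>e > 0\<close> by (simp add: dist_norm power_less_imp_less_base)
  qed
  then show "\<exists>M. \<forall>m\<ge>M. \<forall>n\<ge>M. dist (X m) (X n) < e" by blast
qed

lemma onorm_approximated_on_unit_ball:
  fixes f :: "'a::real_normed_vector \<Rightarrow> 'b::real_normed_vector"
  assumes f: "bounded_linear f" and "0 < e"
  obtains x where "norm x \<le> 1" "onorm f - e < norm (f x)"
proof (rule ccontr)
  note approximant = that
  assume "\<not> thesis"
  then have small: "norm (f x) \<le> onorm f - e" if "norm x \<le> 1" for x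
    using approximant that by (meson not_le)
  have "norm (f x) \<le> (onorm f - e) * norm x" for x
  proof (cases "x = 0")
    case False
    have "norm (f x) / norm x = norm (f (inverse (norm x) *\<^sub>R x))"
      by (simp add: linear_scale[OF bounded_linear.linear[OF f]] divide_inverse mult.commute)
    also have "\<dots> \<le> onorm f - e"
      using False by (intro small) simp
    finally show ?thesis
      using False by (simp add: divide_le_eq)
  qed (simp add: linear_0[OF bounded_linear.linear[OF f]])
  moreover have "0 \<le> onorm f - e"
    using small[of 0] by (simp add: linear_0[OF bounded_linear.linear[OF f]])
  ultimately have "onorm f \<le> onorm f - e"
    by (intro onorm_bound)
  with \<open>0 < e\<close> show False
    by simp
qed

lemma bounded_functional_real_maximizing_sequence:
  fixes \<phi> :: "'a::complex_inner \<Rightarrow> complex"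
  assumes linear: "bounded_linear \<phi>" and scale: "\<And>a x. \<phi> (a *\<^sub>C x) = a * \<phi> x"
  obtains X where "\<And>n. norm (X n) \<le> 1" "\<And>n. Im (\<phi> (X n)) = 0"
    "\<And>n. onorm \<phi> - inverse (real (Suc n)) < Re (\<phi> (X n))"
proof -
  have "\<exists>x. norm x \<le> 1 \<and> Im (\<phi> x) = 0 \<and> onorm \<phi> - inverse (real (Suc n)) < Re (\<phi> x)"
    for n
  proof -
    obtain y where y: "norm y \<le> 1" "onorm \<phi> - inverse (real (Suc n)) < cmod (\<phi> y)"
      using onorm_approximated_on_unit_ball[OF linear, of "inverse (real (Suc n))"] by auto
    obtain u where u: "u * \<phi> y = of_real (cmod (\<phi> y))" "cnj u * u = 1"
      using unimodular_rotation by blast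
    show ?thesis
      using y u norm_scaleC_unimodular[OF u(2), of y] by (intro exI[of _ "u *\<^sub>C y"]) (simp add: scale)
  qed
  then obtain X where "\<forall>n. norm (X n) \<le> 1 \<and> Im (\<phi> (X n)) = 0 \<and>
      onorm \<phi> - inverse (real (Suc n)) < Re (\<phi> (X n))"
    by (metis choice)
  then show ?thesis
    using that by blast
qed

lemma bounded_functional_attains_norm:
  fixes \<phi> :: "'a::{complex_inner,complete_space} \<Rightarrow> complex"
  assumes add: "\<And>x y. \<phi> (x + y) = \<phi> x + \<phi> y" and scale: "\<And>a x. \<phi> (a *\<^sub>C x) = a * \<phi> x"
    and bounded: "\<And>x. cmod (\<phi> x) \<le> K * norm x" and nonzero: "\<phi> x\<^sub>0 \<noteq> 0"
  obtains u L where "norm u = 1" "\<phi> u = of_real L" "0 < L" "\<And>x. cmod (\<phi> x) \<le> L * norm x"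
proof -
  have linear: "bounded_linear \<phi>"
    by (rule bounded_linear_intro[where K=K])
      (simp_all add: add scale scaleR_scaleC scaleR_conv_of_real bounded mult.commute)
  define L where "L = onorm \<phi>"
  have phi_bound: "cmod (\<phi> x) \<le> L * norm x" for x
    unfolding L_def by (rule onorm[OF linear])
  have "L > 0"
    unfolding L_def using onorm_pos_lt[OF linear] nonzero by blast
  obtain X where X_norm: "\<And>n. norm (X n) \<le> 1" and X_real: "\<And>n. Im (\<phi> (X n)) = 0"
    and X_large: "\<And>n. L - inverse (real (Suc n)) < Re (\<phi> (X n))"
    using bounded_functional_real_maximizing_sequence[OF linear scale] unfolding L_def by blast
  \<comment> \<open>by uniform convexity of the unit ball, the maximizing sequence converges\<close>
  have "Cauchy X"
  proof (rule Cauchy_if_norm_add_tendsto_2)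
    show "2 - inverse (real (Suc m)) / L - inverse (real (Suc n)) / L \<le> norm (X m + X n)" for m n
    proof -
      have "2 * L - inverse (real (Suc m)) - inverse (real (Suc n)) \<le> Re (\<phi> (X m + X n))"
        using X_large[of m] X_large[of n] by (simp add: add)
      also have "\<dots> \<le> L * norm (X m + X n)"
        using complex_Re_le_cmod phi_bound order_trans by blast
      finally have "(2 * L - inverse (real (Suc m)) - inverse (real (Suc n))) / L \<le> norm (X m + X n)"
        using \<open>L > 0\<close> by (simp add: divide_le_eq mult.commute)
      then show ?thesis
        using \<open>L > 0\<close> by (simp add: diff_divide_distrib)
    qed
    show "(\<lambda>n. inverse (real (Suc n)) / L) \<longlonglongrightarrow> 0"
      using tendsto_divide_zero[OF LIMSEQ_inverse_real_of_nat] by blast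
  qed (use X_norm \<open>L > 0\<close> in simp_all)
  then obtain u where X_lim: "X \<longlonglongrightarrow> u"
    using Cauchy_convergent_iff convergent_def by blast
  have "norm u \<le> 1"
    using LIMSEQ_le_const2[OF tendsto_norm[OF X_lim]] X_norm by blast
  have phi_lim: "(\<lambda>n. \<phi> (X n)) \<longlonglongrightarrow> \<phi> u"
    by (rule bounded_linear.tendsto[OF linear X_lim])
  have "Re (\<phi> (X n)) \<le> L" for n
    using complex_Re_le_cmod[of "\<phi> (X n)"] phi_bound[of "X n"] X_norm[of n] \<open>L > 0\<close>
    by (smt (verit) mult_left_le)
  then have "Re (\<phi> u) \<le> L"
    using LIMSEQ_le_const2[OF tendsto_Re[OF phi_lim]] by blast
  moreover have "L \<le> Re (\<phi> u)"
  proof (rule LIMSEQ_le[OF _ tendsto_Re[OF phi_lim]])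
    show "(\<lambda>n. L - inverse (real (Suc n))) \<longlonglongrightarrow> L"
      using tendsto_diff[OF tendsto_const LIMSEQ_inverse_real_of_nat, of L] by simp
  qed (use X_large in \<open>auto intro: less_imp_le\<close>)
  moreover have "Im (\<phi> u) = 0"
    using tendsto_Im[OF phi_lim] by (simp add: X_real LIMSEQ_const_iff)
  ultimately have phi_u: "\<phi> u = of_real L"
    by (simp add: complex_eq_iff)
  have "norm u = 1"
    using phi_bound[of u] \<open>norm u \<le> 1\<close> \<open>L > 0\<close> by (simp add: phi_u)
  then show ?thesis
    using phi_u \<open>L > 0\<close> phi_bound by (rule that)
qed

lemma cinner_eq_0_if_norm_le_norm_add_scaleC:
  fixes u v :: "'a::complex_inner"
  assumes min: "\<And>t. norm u \<le> norm (u + t *\<^sub>C v)"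
  shows "cinner u v = 0"
proof -
  define \<beta> where "\<beta> = cinner u v"
  have \<beta>_sq: "\<beta> * cnj \<beta> = of_real ((cmod \<beta>)\<^sup>2)"
    by (simp add: complex_norm_square[symmetric])
  have "0 \<le> 0 - 2 * s * (cmod \<beta>)\<^sup>2 + s\<^sup>2 * ((cmod \<beta>)\<^sup>2 * (norm v)\<^sup>2)" for s :: real
  proof -
    define t where "t = - (of_real s * cnj \<beta>)"
    have "cinner (u + t *\<^sub>C v) (u + t *\<^sub>C v)
        = cinner u u + t * \<beta> + cnj t * cnj \<beta> + cnj t * t * cinner v v"
      unfolding \<beta>_def
      by (simp add: cinner_add_left cinner_add_right cinner_scaleC_left cinner_scaleC_right
          cinner_commute[of v u] algebra_simps)
    also have "\<dots> = cinner u u - 2 * (of_real s * (\<beta> * cnj \<beta>))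
        + (of_real s * of_real s * (\<beta> * cnj \<beta>)) * cinner v v"
      unfolding t_def by (simp add: algebra_simps)
    also have "\<dots> = cinner u u - of_real (2 * s * (cmod \<beta>)\<^sup>2)
        + of_real (s\<^sup>2 * ((cmod \<beta>)\<^sup>2 * (norm v)\<^sup>2))"
      unfolding \<beta>_sq cinner_self_eq_power2_norm by (simp add: power2_eq_square)
    finally have "(norm (u + t *\<^sub>C v))\<^sup>2
        = (norm u)\<^sup>2 - 2 * s * (cmod \<beta>)\<^sup>2 + s\<^sup>2 * ((cmod \<beta>)\<^sup>2 * (norm v)\<^sup>2)"
      by (simp add: power2_norm_eq_cinner)
    moreover have "(norm u)\<^sup>2 \<le> (norm (u + t *\<^sub>C v))\<^sup>2"
      using min[of t] by (simp add: power_mono)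
    ultimately show ?thesis by simp
  qed
  then have "((cmod \<beta>)\<^sup>2)\<^sup>2 \<le> 0 * ((cmod \<beta>)\<^sup>2 * (norm v)\<^sup>2)"
    by (rule quadratic_nonneg_imp_discriminant_le) simp
  then show ?thesis
    unfolding \<beta>_def by simp
qed

theorem Riesz_representation:
  fixes \<phi> :: "'a::{complex_inner,complete_space} \<Rightarrow> complex"
  assumes add: "\<And>x y. \<phi> (x + y) = \<phi> x + \<phi> y" and scale: "\<And>a x. \<phi> (a *\<^sub>C x) = a * \<phi> x"
    and bounded: "\<And>x. cmod (\<phi> x) \<le> K * norm x"
  obtains w where "\<And>x. \<phi> x = cinner w x"
proof (cases "\<forall>x. \<phi> x = 0")
  case True
  then show ?thesis
    by (intro that[of 0]) simp
next
  case False
  then obtain u L where u: "norm u = 1" "\<phi> u = of_real L"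
    and "0 < L" and phi_bound: "\<And>x. cmod (\<phi> x) \<le> L * norm x"
    using bounded_functional_attains_norm[OF add scale bounded] by blast
  have diff: "\<phi> (x - y) = \<phi> x - \<phi> y" for x y
    by (metis add diff_add_cancel eq_diff_eq)
  \<comment> \<open>\<open>u\<close> is a norm-attaining unit vector, hence orthogonal to the kernel of \<open>\<phi>\<close>\<close>
  have orth: "cinner u v = 0" if "\<phi> v = 0" for v
  proof (rule cinner_eq_0_if_norm_le_norm_add_scaleC)
    fix t
    have "L * norm u = cmod (\<phi> (u + t *\<^sub>C v))"
      using u that \<open>0 < L\<close> by (simp add: add scale)
    also have "\<dots> \<le> L * norm (u + t *\<^sub>C v)"
      by (rule phi_bound)
    finally show "norm u \<le> norm (u + t *\<^sub>C v)"
      using \<open>0 < L\<close> by simp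
  qed
  show ?thesis
  proof (rule that)
    fix x
    have "\<phi> ((of_real L) *\<^sub>C x - \<phi> x *\<^sub>C u) = 0"
      using u by (simp add: diff scale)
    then have "cinner u ((of_real L) *\<^sub>C x - \<phi> x *\<^sub>C u) = 0"
      by (rule orth)
    then have "of_real L * cinner u x - \<phi> x * cinner u u = 0"
      by (simp add: cinner_diff_right cinner_scaleC_right)
    then show "\<phi> x = cinner (L *\<^sub>R u) x"
      using u by (simp add: cinner_scaleR_left cinner_self_eq_power2_norm)
  qed
qed

lemma cadjoint_exists:
  fixes f :: "'a::{complex_inner,complete_space} \<Rightarrow> 'a"
  assumes "bounded_clinear f"
  shows "\<exists>g. \<forall>x y. cinner (f x) y = cinner x (g y)"
proof -
  obtain M where M: "\<And>x. norm (f x) \<le> M * norm x"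
    using bounded_clinear_bound[OF assms] by blast
  have "\<exists>w. \<forall>x. cinner y (f x) = cinner w x" for y
  proof -
    have "cmod (cinner y (f x)) \<le> (norm y * M) * norm x" for x
      using cinner_Cauchy_Schwarz[of y "f x"] mult_left_mono[OF M[of x], of "norm y"]
      by (simp add: mult.assoc)
    then show ?thesis
      by (rule Riesz_representation[of "\<lambda>x. cinner y (f x)" "norm y * M", rotated 2])
        (auto simp: bounded_clinear_add[OF assms] bounded_clinear_scaleC[OF assms]
          cinner_add_right cinner_scaleC_right)
  qed
  then obtain g where g: "\<And>y x. cinner y (f x) = cinner (g y) x"
    by (metis choice)
  have "cinner (f x) y = cinner x (g y)" for x y
    using g[of y x] cinner_commute[of "f x" y] cinner_commute[of x "g y"] by simp
  then show ?thesis by blast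
qed

lemma cinner_cadjoint:
  fixes f :: "'a::{complex_inner,complete_space} \<Rightarrow> 'a"
  assumes "bounded_clinear f"
  shows "cinner (f x) y = cinner x (cadjoint f y)"
  using someI_ex[OF cadjoint_exists[OF assms]] unfolding cadjoint_def by blast

section \<open>Positive operators and uniqueness of positive square roots\<close>

lemma power2_norm_add_scaleR:
  fixes u w :: "'a::complex_inner"
  shows "(norm (u + s *\<^sub>R w))\<^sup>2 = (norm u)\<^sup>2 + 2 * s * Re (cinner u w) + s\<^sup>2 * (norm w)\<^sup>2"
proof -
  have "Re (cinner w u) = Re (cinner u w)"
    by (subst cinner_commute) simp
  then show ?thesis
    unfolding power2_norm_eq_cinner
    by (simp add: cinner_add_left cinner_add_right cinner_scaleR_left cinner_scaleR_right
        power2_eq_square algebra_simps)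
qed

lemma positive_op_bounded_clinear: "positive_op p \<Longrightarrow> bounded_clinear p"
  by (simp add: positive_op_def)

lemma positive_op_form_nonneg: "positive_op p \<Longrightarrow> 0 \<le> Re (cinner x (p x))"
  by (simp add: positive_op_def)

lemma positive_op_hermitian:
  assumes "positive_op p"
  shows "cinner (p x) y = cinner x (p y)"
proof -
  note p = positive_op_bounded_clinear[OF assms]
  have real: "Im (cinner z (p z)) = 0" for z
    using assms by (simp add: positive_op_def)
  define \<alpha> where "\<alpha> = cinner x (p y)"
  define \<beta> where "\<beta> = cinner y (p x)"
  have "cinner (x + y) (p (x + y)) = cinner x (p x) + cinner y (p y) + \<alpha> + \<beta>"
    unfolding \<alpha>_def \<beta>_def by (simp add: bounded_clinear_add[OF p] cinner_add_left cinner_add_right)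
  then have "Im (\<alpha> + \<beta>) = 0"
    using real[of "x + y"] real[of x] real[of y] by simp
  moreover have "cinner (x + \<i> *\<^sub>C y) (p (x + \<i> *\<^sub>C y))
      = cinner x (p x) + cinner y (p y) + \<i> * \<alpha> - \<i> * \<beta>"
    unfolding \<alpha>_def \<beta>_def
    by (simp add: bounded_clinear_add[OF p] bounded_clinear_scaleC[OF p] cinner_add_left
        cinner_add_right cinner_scaleC_left cinner_scaleC_right algebra_simps)
  then have "Re (\<alpha> - \<beta>) = 0"
    using real[of "x + \<i> *\<^sub>C y"] real[of x] real[of y] by simp
  ultimately have "\<alpha> = cnj \<beta>"
    by (simp add: complex_eq_iff)
  then show ?thesis
    unfolding \<alpha>_def \<beta>_def by (metis cinner_commute)
qed

lemma cadjoint_positive_op: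
  fixes p :: "'a::{complex_inner,complete_space} \<Rightarrow> 'a"
  assumes "positive_op p"
  shows "cadjoint p = p"
proof
  fix y
  show "cadjoint p y = p y"
    using cinner_cadjoint[OF positive_op_bounded_clinear[OF assms]] positive_op_hermitian[OF assms]
    by (metis cinner_eq_imp_eq)
qed

lemma positive_op_Cauchy_Schwarz:
  assumes p: "positive_op p"
  shows "(cmod (cinner x (p y)))\<^sup>2 \<le> Re (cinner x (p x)) * Re (cinner y (p y))"
proof (rule hermitian_form_Cauchy_Schwarz[where F="\<lambda>x y. cinner x (p y)"])
  note bp = positive_op_bounded_clinear[OF p]
  show "cinner x (p (y + z)) = cinner x (p y) + cinner x (p z)" for x y z
    by (simp add: bounded_clinear_add[OF bp] cinner_add_right)
  show "cinner x (p (a *\<^sub>C y)) = a * cinner x (p y)" for x a y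
    by (simp add: bounded_clinear_scaleC[OF bp] cinner_scaleC_right)
  show "cinner x (p y) = cnj (cinner y (p x))" for x y
    by (metis positive_op_hermitian[OF p] cinner_commute)
qed (rule positive_op_form_nonneg[OF p])

lemma positive_op_eq_0_if_form_eq_0:
  assumes p: "positive_op p" and "Re (cinner y (p y)) = 0"
  shows "p y = 0"
proof -
  have "(cmod (cinner (p y) (p y)))\<^sup>2 \<le> Re (cinner (p y) (p (p y))) * Re (cinner y (p y))"
    using positive_op_Cauchy_Schwarz[OF p] positive_op_hermitian[OF p] by metis
  with assms(2) show ?thesis
    using cinner_self_zero[of "p y"] by simp
qed

lemma power2_norm_positive_op_le:
  assumes p: "positive_op p" and M: "0 \<le> M" "\<And>x. norm (p x) \<le> M * norm x"
  shows "(norm (p z))\<^sup>2 \<le> M * Re (cinner z (p z))"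
proof (cases "p z = 0")
  case True
  then show ?thesis
    using M(1) positive_op_form_nonneg[OF p] by simp
next
  case False
  have "((norm (p z))\<^sup>2)\<^sup>2 = (cmod (cinner z (p (p z))))\<^sup>2"
    using positive_op_hermitian[OF p, of z "p z"] by (metis norm_cinner_self)
  also have "\<dots> \<le> Re (cinner z (p z)) * Re (cinner (p z) (p (p z)))"
    by (rule positive_op_Cauchy_Schwarz[OF p])
  also have "Re (cinner (p z) (p (p z))) \<le> M * (norm (p z))\<^sup>2"
    using complex_Re_le_cmod cinner_Cauchy_Schwarz mult_left_mono[OF M(2)[of "p z"]]
    by (smt (verit, ccfv_SIG) norm_ge_zero power2_eq_square mult.left_commute)
  then have "Re (cinner z (p z)) * Re (cinner (p z) (p (p z)))
      \<le> Re (cinner z (p z)) * (M * (norm (p z))\<^sup>2)"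
    by (rule mult_left_mono) (rule positive_op_form_nonneg[OF p])
  finally have "(norm (p z))\<^sup>2 * (norm (p z))\<^sup>2 \<le> (norm (p z))\<^sup>2 * (M * Re (cinner z (p z)))"
    by (simp add: power2_eq_square mult_ac)
  then show ?thesis
    by (rule mult_left_le_imp_le) (use False in simp)
qed

lemma norm_diff_scaleR_positive_op_le:
  assumes P: "positive_op P" and M: "0 \<le> M" "\<And>x. norm (P x) \<le> M * norm x"
    and "0 \<le> s" "s * M \<le> 1"
  shows "norm (w - s *\<^sub>R P w) \<le> norm w"
proof (rule power2_le_imp_le)
  define R where "R = Re (cinner w (P w))"
  have "0 \<le> R"
    unfolding R_def by (rule positive_op_form_nonneg[OF P])
  have "s\<^sup>2 * (norm (P w))\<^sup>2 \<le> s\<^sup>2 * (M * R)"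
    unfolding R_def using power2_norm_positive_op_le[OF P M] by (simp add: mult_left_mono)
  also have "\<dots> = s * (s * M) * R"
    by (simp add: power2_eq_square)
  also have "\<dots> \<le> s * 1 * R"
    using assms(4,5) \<open>0 \<le> R\<close> by (intro mult_right_mono mult_left_mono) auto
  also have "\<dots> \<le> 2 * s * R"
    using assms(4) \<open>0 \<le> R\<close> by simp
  finally show "(norm (w - s *\<^sub>R P w))\<^sup>2 \<le> (norm w)\<^sup>2"
    using power2_norm_add_scaleR[of w "- s" "P w"] unfolding R_def by simp
qed simp

lemma positive_op_growth_step:
  assumes b: "positive_op b" and "0 \<le> s"
  shows "(norm u)\<^sup>2 + 2 * s * Re (cinner u (b u)) \<le> (norm (u + s *\<^sub>R b u))\<^sup>2"
    and "Re (cinner u (b u)) \<le> Re (cinner (u + s *\<^sub>R b u) (b (u + s *\<^sub>R b u)))"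
proof -
  note bb = positive_op_bounded_clinear[OF b]
  show "(norm u)\<^sup>2 + 2 * s * Re (cinner u (b u)) \<le> (norm (u + s *\<^sub>R b u))\<^sup>2"
    by (simp add: power2_norm_add_scaleR)
  have "cinner (u + s *\<^sub>R b u) (b (u + s *\<^sub>R b u)) = cinner u (b u)
      + of_real (2 * s) * cinner (b u) (b u) + of_real (s\<^sup>2) * cinner (b u) (b (b u))"
    using positive_op_hermitian[OF b, of u "b u"]
    by (simp add: bounded_clinear_add[OF bb] bounded_clinear_scaleR[OF bb] cinner_add_left
        cinner_add_right cinner_scaleR_left cinner_scaleR_right power2_eq_square algebra_simps)
  moreover have "0 \<le> Re (cinner (b u) (b (b u)))"
    by (rule positive_op_form_nonneg[OF b])
  ultimately show "Re (cinner u (b u)) \<le> Re (cinner (u + s *\<^sub>R b u) (b (u + s *\<^sub>R b u)))"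
    using \<open>0 \<le> s\<close> by (simp add: cinner_self_eq_power2_norm)
qed

lemma positive_op_iterate_growth:
  assumes b: "positive_op b" and "0 \<le> s"
  defines "G \<equiv> \<lambda>u. u + s *\<^sub>R b u"
  shows "(norm y)\<^sup>2 + 2 * real n * s * Re (cinner y (b y)) \<le> (norm ((G ^^ n) y))\<^sup>2
    \<and> Re (cinner y (b y)) \<le> Re (cinner ((G ^^ n) y) (b ((G ^^ n) y)))"
proof (induction n)
  case 0
  then show ?case by simp
next
  case (Suc n)
  let ?u = "(G ^^ n) y"
  have "2 * s * Re (cinner y (b y)) \<le> 2 * s * Re (cinner ?u (b ?u))"
    using Suc.IH \<open>0 \<le> s\<close> by (simp add: mult_left_mono)
  then show ?case
    using Suc.IH positive_op_growth_step[OF b \<open>0 \<le> s\<close>, of ?u] unfolding G_def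
    by (simp add: algebra_simps)
qed

lemma positive_op_form_eq_0_if_orbit_bounded:
  assumes b: "positive_op b" and "0 < s"
    and bounded: "\<And>n. norm (((\<lambda>u. u + s *\<^sub>R b u) ^^ n) y) \<le> C"
  shows "Re (cinner y (b y)) = 0"
proof (rule ccontr)
  define R where "R = Re (cinner y (b y))"
  assume "Re (cinner y (b y)) \<noteq> 0"
  then have "0 < 2 * s * R"
    using positive_op_form_nonneg[OF b, of y] \<open>0 < s\<close> unfolding R_def by simp
  then obtain n :: nat where "C\<^sup>2 < real n * (2 * s * R)"
    by (meson reals_Archimedean3)
  moreover have "(norm y)\<^sup>2 + 2 * real n * s * R \<le> C\<^sup>2"
    using positive_op_iterate_growth[OF b, of s y n] \<open>0 < s\<close> bounded[of n] unfolding R_def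
    by (meson less_imp_le norm_ge_zero order_trans power_mono)
  ultimately show False
    by (simp add: mult_ac) (smt (verit) zero_le_power2)
qed

lemma positive_op_anticommuting_eq_0:
  assumes b: "positive_op b" and P: "positive_op P" and D: "bounded_linear D"
    and anti: "\<And>x. b (D x) = - D (P x)"
  shows "b (D x) = 0"
proof -
  obtain MP where "0 \<le> MP" and MP: "\<And>x. norm (P x) \<le> MP * norm x"
    using bounded_clinear_bound[OF positive_op_bounded_clinear[OF P]] by blast
  obtain MD where "0 \<le> MD" and MD: "\<And>x. norm (D x) \<le> norm x * MD"
    using bounded_linear.nonneg_bounded[OF D] by blast
  define s where "s = 1 / (MP + 1)"
  define E where "E w = w - s *\<^sub>R P w" for w
  define G where "G u = u + s *\<^sub>R b u" for u
  have "0 < s" "s * MP \<le> 1"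
    unfolding s_def using \<open>0 \<le> MP\<close> by (simp_all add: field_simps)
  \<comment> \<open>\<open>G\<close> expands every vector with \<open>Re \<langle>y, b y\<rangle> > 0\<close> without bound, while \<open>E\<close> is a
    contraction; since \<open>G D = D E\<close>, the \<open>G\<close>-orbits in the range of \<open>D\<close> stay bounded\<close>
  have "G (D w) = D (E w)" for w
    unfolding G_def E_def
    by (simp add: anti linear_diff[OF bounded_linear.linear[OF D]]
        linear_scale[OF bounded_linear.linear[OF D]])
  then have orbit: "(G ^^ n) (D w) = D ((E ^^ n) w)" for n w
    by (induction n) simp_all
  have contract: "norm ((E ^^ n) w) \<le> norm w" for n w
  proof (induction n)
    case (Suc n)
    have "norm (E ((E ^^ n) w)) \<le> norm ((E ^^ n) w)"
      unfolding E_def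
      using norm_diff_scaleR_positive_op_le[OF P \<open>0 \<le> MP\<close> MP less_imp_le[OF \<open>0 < s\<close>] \<open>s * MP \<le> 1\<close>] .
    with Suc show ?case by simp
  qed simp
  have "norm ((G ^^ n) (D x)) \<le> norm x * MD" for n
    unfolding orbit using MD contract \<open>0 \<le> MD\<close> by (meson mult_right_mono order_trans)
  then have "Re (cinner (D x) (b (D x))) = 0"
    using positive_op_form_eq_0_if_orbit_bounded[OF b \<open>0 < s\<close>] unfolding G_def by blast
  then show ?thesis
    by (rule positive_op_eq_0_if_form_eq_0[OF b])
qed

theorem positive_op_sqrt_unique:
  assumes b: "positive_op b" and P: "positive_op P" and eq: "b \<circ> b = P \<circ> P"
  shows "b = P"
proof -
  note bb = positive_op_bounded_clinear[OF b] and bP = positive_op_bounded_clinear[OF P]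
  define D where "D x = b x - P x" for x
  have "bounded_linear D"
    unfolding D_def[abs_def]
    using bounded_clinear_imp_bounded_linear[OF bb] bounded_clinear_imp_bounded_linear[OF bP]
    by (rule bounded_linear_sub)
  moreover have anti: "b (D x) = - D (P x)" for x
    using fun_cong[OF eq, of x] unfolding D_def by (simp add: bounded_clinear_diff[OF bb])
  ultimately have bD: "b (D w) = 0" for w
    by (rule positive_op_anticommuting_eq_0[OF b P])
  then have DP: "D (P w) = 0" for w
    using anti[of w] by simp
  \<comment> \<open>\<open>P D\<close> is the adjoint of \<open>D P = 0\<close>\<close>
  have PD: "P (D w) = 0" for w
  proof (rule cinner_eq_imp_eq)
    fix z
    have "cinner z (P (D w)) = cinner (D (P z)) w"
      by (simp add: D_def positive_op_hermitian[OF b] positive_op_hermitian[OF P]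
          cinner_diff_left cinner_diff_right bounded_clinear_diff[OF bP])
    then show "cinner z (P (D w)) = cinner z 0"
      using DP by simp
  qed
  have "D w = 0" for w
  proof -
    have "cinner (D w) (D w) = cinner (b w) (D w) - cinner (P w) (D w)"
      by (metis D_def cinner_diff_left)
    also have "\<dots> = cinner w (b (D w)) - cinner w (P (D w))"
      by (simp only: positive_op_hermitian[OF b] positive_op_hermitian[OF P])
    also have "\<dots> = 0"
      using bD PD by simp
    finally show ?thesis
      using cinner_self_zero by blast
  qed
  then show ?thesis
    unfolding D_def by auto
qed

lemma op_abs_positive_op:
  fixes p :: "'a::{complex_inner,complete_space} \<Rightarrow> 'a"
  assumes "positive_op p"
  shows "op_abs p = p"
  unfolding op_abs_def op_sqrt_def cadjoint_positive_op[OF assms]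
  using positive_op_sqrt_unique[OF _ assms] assms by blast

lemma sesquilinear_form_eq_0_if_diagonal_eq_0:
  fixes F :: "'v::complex_vector \<Rightarrow> 'v \<Rightarrow> complex"
  assumes add_right: "\<And>x y z. F x (y + z) = F x y + F x z"
    and add_left: "\<And>x y z. F (x + y) z = F x z + F y z"
    and scale_right: "\<And>x a y. F x (a *\<^sub>C y) = a * F x y"
    and scale_left: "\<And>x a y. F (a *\<^sub>C x) y = cnj a * F x y"
    and diagonal: "\<And>z. F z z = 0"
  shows "F x y = 0"
proof -
  have "F x y + F y x = 0"
    using diagonal[of "x + y"] diagonal[of x] diagonal[of y] by (simp add: add_right add_left add.commute)
  moreover have "\<i> * F x y - \<i> * F y x = 0"
    using diagonal[of "x + \<i> *\<^sub>C y"] diagonal[of x] diagonal[of y]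
    by (simp add: add_right add_left scale_right scale_left algebra_simps)
  then have "F x y - F y x = 0"
    by (simp add: right_diff_distrib[symmetric])
  ultimately show ?thesis
    by (simp add: algebra_simps)
qed

locale operator_hilbert_module =
  fixes A :: "('h::{complex_inner,complete_space} \<Rightarrow> 'h) set"
    and act :: "'e::{complex_vector,banach} \<Rightarrow> ('h \<Rightarrow> 'h) \<Rightarrow> 'e"
    and ip :: "'e \<Rightarrow> 'e \<Rightarrow> ('h \<Rightarrow> 'h)"
  assumes module: "hilbert_module A act ip" and A_bounded: "A \<subseteq> {f. bounded_clinear f}"
begin

lemma ip_in_A: "ip x y \<in> A"
  using module by (simp add: hilbert_module_def)

lemma ip_bounded_clinear: "bounded_clinear (ip x y)"
  using ip_in_A A_bounded by blast

lemma ip_bounded_linear: "bounded_linear (ip x y)"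
  by (rule bounded_clinear_imp_bounded_linear[OF ip_bounded_clinear])

lemma ip_add_right: "ip x (y + z) h = ip x y h + ip x z h"
  using module by (simp add: hilbert_module_def)

lemma ip_scaleC_right: "ip x (a *\<^sub>C y) h = a *\<^sub>C ip x y h"
  using module by (simp add: hilbert_module_def)

lemma ip_act_right: "a \<in> A \<Longrightarrow> ip x (act y a) h = ip x y (a h)"
  using module by (simp add: hilbert_module_def)

lemma positive_op_ip_self: "positive_op (ip x x)"
  using module by (simp add: hilbert_module_def)

lemma cinner_ip_swap: "cinner h (ip x y k) = cinner (ip y x h) k"
  using module cinner_cadjoint[OF ip_bounded_clinear, of y x h k]
  by (simp add: hilbert_module_def)

lemma ip_add_left: "ip (x + x') y h = ip x y h + ip x' y h"
  by (rule cinner_eq_imp_eq) (simp add: cinner_ip_swap ip_add_right cinner_add_left cinner_add_right)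

lemma ip_scaleC_left: "ip (a *\<^sub>C x) y h = cnj a *\<^sub>C ip x y h"
  by (rule cinner_eq_imp_eq) (simp add: cinner_ip_swap ip_scaleC_right cinner_scaleC_left cinner_scaleC_right)

lemma ip_diff_left: "ip (x - x') y h = ip x y h - ip x' y h"
  by (metis ip_add_left diff_add_cancel eq_diff_eq)

lemma ip_diff_right: "ip x (y - y') h = ip x y h - ip x y' h"
  by (metis ip_add_right diff_add_cancel eq_diff_eq)

lemma power2_norm_eq_onorm_ip: "(norm x)\<^sup>2 = onorm (ip x x)"
  using module onorm_pos_le[OF ip_bounded_linear[of x x]] by (simp add: hilbert_module_def)

lemma norm_ip_self_le: "norm (ip x x h) \<le> (norm x)\<^sup>2 * norm h"
  using onorm[OF ip_bounded_linear[of x x], of h] by (simp add: power2_norm_eq_onorm_ip)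

lemma cinner_ip_Cauchy_Schwarz:
  "(cmod (cinner h (ip x y h)))\<^sup>2 \<le> Re (cinner h (ip x x h)) * Re (cinner h (ip y y h))"
proof (rule hermitian_form_Cauchy_Schwarz[where F="\<lambda>x y. cinner h (ip x y h)"])
  show "cinner h (ip x (y + z) h) = cinner h (ip x y h) + cinner h (ip x z h)" for x y z
    by (simp add: ip_add_right cinner_add_right)
  show "cinner h (ip x (a *\<^sub>C y) h) = a * cinner h (ip x y h)" for x a y
    by (simp add: ip_scaleC_right cinner_scaleC_right)
  show "cinner h (ip x y h) = cnj (cinner h (ip y x h))" for x y
    using cinner_ip_swap[of h y x h] cinner_commute[of h "ip x y h"] by simp
  show "0 \<le> Re (cinner h (ip x x h))" for x
    by (rule positive_op_form_nonneg[OF positive_op_ip_self])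
qed

theorem norm_ip_le: "norm (ip u v h) \<le> norm u * norm v * norm h"
proof -
  define a where "a = ip u v"
  have "a \<in> A"
    unfolding a_def by (rule ip_in_A)
  define w where "w = act u a"
  \<comment> \<open>\<open>\<langle>a h, a h\<rangle> = \<langle>h, \<langle>v, u a\<rangle> h\<rangle>\<close>: Cauchy--Schwarz for the form \<open>\<langle>h, \<langle>\<cdot>,\<cdot>\<rangle> h\<rangle>\<close> applies\<close>
  have "cinner (a h) (a h) = cinner h (ip v w h)"
    unfolding w_def a_def by (simp add: ip_act_right[OF \<open>a \<in> A\<close>, unfolded a_def] cinner_ip_swap)
  then have "((norm (a h))\<^sup>2)\<^sup>2 = (cmod (cinner h (ip v w h)))\<^sup>2"
    by (metis norm_cinner_self)
  also have "\<dots> \<le> Re (cinner h (ip v v h)) * Re (cinner h (ip w w h))"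
    by (rule cinner_ip_Cauchy_Schwarz)
  also have "\<dots> \<le> ((norm v)\<^sup>2 * (norm h)\<^sup>2) * ((norm u)\<^sup>2 * (norm (a h))\<^sup>2)"
  proof (rule mult_mono)
    show "Re (cinner h (ip v v h)) \<le> (norm v)\<^sup>2 * (norm h)\<^sup>2"
      using complex_Re_le_cmod[of "cinner h (ip v v h)"] cinner_Cauchy_Schwarz[of h "ip v v h"]
        mult_left_mono[OF norm_ip_self_le[of v h], of "norm h"]
      by (simp add: power2_eq_square mult_ac)
    have "cinner h (ip w w h) = cinner (ip u u (a h)) (a h)"
      unfolding w_def by (simp add: ip_act_right[OF \<open>a \<in> A\<close>] cinner_ip_swap)
    then have "Re (cinner h (ip w w h)) \<le> norm (ip u u (a h)) * norm (a h)"
      using complex_Re_le_cmod cinner_Cauchy_Schwarz order_trans by metis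
    also have "\<dots> \<le> (norm u)\<^sup>2 * norm (a h) * norm (a h)"
      by (intro mult_right_mono norm_ip_self_le) simp
    finally show "Re (cinner h (ip w w h)) \<le> (norm u)\<^sup>2 * (norm (a h))\<^sup>2"
      by (simp add: power2_eq_square mult_ac)
    show "0 \<le> Re (cinner h (ip w w h))"
      by (rule positive_op_form_nonneg[OF positive_op_ip_self])
  qed simp
  finally have "(norm (a h))\<^sup>2 * (norm (a h))\<^sup>2 \<le> (norm (a h))\<^sup>2 * (norm u * norm v * norm h)\<^sup>2"
    by (simp add: power2_eq_square mult_ac)
  then have "(norm (a h))\<^sup>2 \<le> (norm u * norm v * norm h)\<^sup>2"
    by (cases "a h = 0") (simp, erule mult_left_le_imp_le, simp)
  then show ?thesis
    unfolding a_def by (rule power2_le_imp_le) simp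
qed

lemma op_abs_ip_self: "op_abs (ip x x) = ip x x"
  by (rule op_abs_positive_op[OF positive_op_ip_self])

lemma ip_eq_scaleR_if_diagonal:
  assumes S: "bounded_clinear S" and diagonal: "\<And>z. ip (S z) (S z) = (\<lambda>h. k *\<^sub>R ip z z h)"
  shows "ip (S x) (S y) = (\<lambda>h. k *\<^sub>R ip x y h)"
proof (intro ext cinner_eq_imp_eq)
  fix h g
  let ?F = "\<lambda>x y. cinner g (ip (S x) (S y) h) - of_real k * cinner g (ip x y h)"
  have "?F x y = 0"
  proof (rule sesquilinear_form_eq_0_if_diagonal_eq_0[of ?F])
    show "?F x (y + z) = ?F x y + ?F x z" for x y z
      by (simp add: bounded_clinear_add[OF S] ip_add_right cinner_add_right algebra_simps)
    show "?F (x + y) z = ?F x z + ?F y z" for x y z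
      by (simp add: bounded_clinear_add[OF S] ip_add_left cinner_add_right algebra_simps)
    show "?F x (a *\<^sub>C y) = a * ?F x y" for x a y
      by (simp add: bounded_clinear_scaleC[OF S] ip_scaleC_right cinner_scaleC_right algebra_simps)
    show "?F (a *\<^sub>C x) y = cnj a * ?F x y" for x a y
      by (simp add: bounded_clinear_scaleC[OF S] ip_scaleC_left cinner_scaleC_right algebra_simps)
    show "?F z z = 0" for z
      by (simp add: diagonal cinner_scaleR_right)
  qed
  then show "cinner g (ip (S x) (S y) h) = cinner g (k *\<^sub>R ip x y h)"
    by (simp add: cinner_scaleR_right)
qed

end

section \<open>Perturbations of scaled isometries\<close>

lemma angle_constant_bound:
  fixes \<theta> \<delta> \<gamma> m t :: real
  assumes "0 \<le> \<theta>" "\<theta> < 1" "0 \<le> \<delta>" "0 \<le> \<gamma>" "0 \<le> m" and lower: "(1 - \<theta>)\<^sup>2 * m \<le> t"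
  shows "(\<theta>\<^sup>2 + 2 * \<theta> + \<delta>) * m + \<bar>m - t\<bar> * \<gamma>
      \<le> ((\<theta>\<^sup>2 + 2 * \<theta> + \<delta> + (\<theta>\<^sup>2 - 2 * \<theta> + 2) * \<gamma>) / (1 - \<theta>)\<^sup>2) * t"
proof -
  define d where "d = (1 - \<theta>)\<^sup>2"
  define a where "a = \<theta>\<^sup>2 + 2 * \<theta> + \<delta>"
  define \<epsilon> where "\<epsilon> = (a + (d + 1) * \<gamma>) / d"
  have "0 < d" "d \<le> 1"
    unfolding d_def using assms(1,2) by (simp_all add: power_le_one)
  have "0 \<le> a"
    unfolding a_def using assms(1,3) by simp
  have "\<theta>\<^sup>2 - 2 * \<theta> + 2 = d + 1"
    unfolding d_def by (simp add: power2_eq_square algebra_simps)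
  then have \<epsilon>_eq: "\<epsilon> = (\<theta>\<^sup>2 + 2 * \<theta> + \<delta> + (\<theta>\<^sup>2 - 2 * \<theta> + 2) * \<gamma>) / (1 - \<theta>)\<^sup>2"
    unfolding \<epsilon>_def a_def d_def by simp
  have "a * d \<le> a + (d + 1) * \<gamma>"
    using \<open>d \<le> 1\<close> \<open>0 \<le> a\<close> \<open>0 < d\<close> assms(4) by (smt (verit) mult_left_le mult_nonneg_nonneg)
  then have "a \<le> \<epsilon>"
    unfolding \<epsilon>_def using \<open>0 < d\<close> by (simp add: le_divide_eq)
  have "\<gamma> * d \<le> a + (d + 1) * \<gamma>"
    using \<open>0 \<le> a\<close> assms(4) by (simp add: algebra_simps)
  then have "\<gamma> \<le> \<epsilon>"
    unfolding \<epsilon>_def using \<open>0 < d\<close> by (simp add: le_divide_eq)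
  have "a * m + \<bar>m - t\<bar> * \<gamma> \<le> \<epsilon> * t"
  proof (cases "m \<le> t")
    case True
    have "a * m + (t - m) * \<gamma> \<le> \<epsilon> * m + (t - m) * \<epsilon>"
      using \<open>a \<le> \<epsilon>\<close> \<open>\<gamma> \<le> \<epsilon>\<close> \<open>0 \<le> m\<close> True by (intro add_mono mult_right_mono mult_left_mono) auto
    with True show ?thesis
      by (simp add: algebra_simps)
  next
    case False
    \<comment> \<open>here \<open>t < m\<close>, and the lower bound \<open>d m \<le> t\<close> pays for the excess \<open>m - t\<close>\<close>
    have "(\<epsilon> + \<gamma>) * (d * m) = (a + \<gamma>) * m + 2 * \<gamma> * d * m"
      unfolding \<epsilon>_def using \<open>0 < d\<close> by (simp add: field_simps)
    then have "(a + \<gamma>) * m \<le> (\<epsilon> + \<gamma>) * (d * m)"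
      using \<open>0 < d\<close> \<open>0 \<le> m\<close> assms(4) by simp
    also have "\<dots> \<le> (\<epsilon> + \<gamma>) * t"
      using lower \<open>\<gamma> \<le> \<epsilon>\<close> assms(4) unfolding d_def by (intro mult_left_mono) auto
    finally show ?thesis
      using False by (simp add: algebra_simps)
  qed
  then show ?thesis
    unfolding \<epsilon>_eq a_def .
qed

context operator_hilbert_module
begin

lemma norm_ip_diff_le:
  "norm (ip x' y' h - ip x y h) \<le> (norm (x' - x) * norm y' + norm x * norm (y' - y)) * norm h"
proof -
  have "ip x' y' h - ip x y h = ip (x' - x) y' h + ip x (y' - y) h"
    by (simp add: ip_diff_left ip_diff_right)
  then show ?thesis
    using norm_triangle_le[OF add_mono[OF norm_ip_le[of "x' - x" y' h]
          norm_ip_le[of x "y' - y" h]]]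
    by (simp add: algebra_simps)
qed

lemma norm_eq_if_ip_scaled:
  assumes "ip (S x) (S x) = (\<lambda>h. \<sigma>\<^sup>2 *\<^sub>R ip x x h)" "0 \<le> \<sigma>"
  shows "norm (S x) = \<sigma> * norm x"
proof -
  have "(norm (S x))\<^sup>2 = (\<sigma> * norm x)\<^sup>2"
    using assms(1) onorm_scaleR[OF ip_bounded_linear[of x x], of "\<sigma>\<^sup>2"]
    by (simp add: power2_norm_eq_onorm_ip power_mult_distrib)
  then show ?thesis
    using assms(2) by (simp add: power2_eq_iff_nonneg)
qed

lemma onorm_ip_perturbation_le:
  fixes S T :: "'e \<Rightarrow> 'e"
  assumes S_ip: "\<And>x y. ip (S x) (S y) = (\<lambda>h. \<sigma>\<^sup>2 *\<^sub>R ip x y h)" and "0 \<le> \<sigma>"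
    and close: "\<And>x. norm (T x - S x) \<le> \<theta> * \<sigma> * norm x"
    and c: "bounded_linear c" and "0 \<le> \<theta>" "0 \<le> \<delta>" and xy: "angle_rel ip c \<delta> x y"
  defines "m \<equiv> \<sigma>\<^sup>2 * norm x * norm y" and "t \<equiv> norm (T x) * norm (T y)"
  shows "onorm (\<lambda>h. ip (T x) (T y) h - t *\<^sub>R c h)
    \<le> (\<theta>\<^sup>2 + 2 * \<theta> + \<delta>) * m + \<bar>m - t\<bar> * onorm c"
proof (rule onorm_bound)
  show "0 \<le> (\<theta>\<^sup>2 + 2 * \<theta> + \<delta>) * m + \<bar>m - t\<bar> * onorm c"
    using assms(5,6) onorm_pos_le[OF c] unfolding m_def by simp
  have norm_S: "norm (S z) = \<sigma> * norm z" for z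
    by (rule norm_eq_if_ip_scaled[OF S_ip \<open>0 \<le> \<sigma>\<close>])
  have T_upper: "norm (T z) \<le> (1 + \<theta>) * \<sigma> * norm z" for z
    using norm_triangle_ineq[of "S z" "T z - S z"] close[of z] by (simp add: norm_S algebra_simps)
  fix h
  have "ip (T x) (T y) h - t *\<^sub>R c h = (ip (T x) (T y) h - ip (S x) (S y) h)
      + \<sigma>\<^sup>2 *\<^sub>R (ip x y h - (norm x * norm y) *\<^sub>R c h) + (m - t) *\<^sub>R c h"
    unfolding m_def by (simp add: S_ip algebra_simps)
  also have "norm \<dots> \<le> (\<theta> * \<sigma> * norm x * ((1 + \<theta>) * \<sigma> * norm y)
      + \<sigma> * norm x * (\<theta> * \<sigma> * norm y)) * norm h
      + \<sigma>\<^sup>2 * (\<delta> * norm x * norm y * norm h) + \<bar>m - t\<bar> * (onorm c * norm h)"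
  proof (intro norm_triangle_le add_mono)
    show "norm (ip (T x) (T y) h - ip (S x) (S y) h) \<le> (\<theta> * \<sigma> * norm x * ((1 + \<theta>) * \<sigma> * norm y)
        + \<sigma> * norm x * (\<theta> * \<sigma> * norm y)) * norm h"
      using norm_ip_diff_le[of "T x" "T y" h "S x" "S y"] close T_upper norm_S \<open>0 \<le> \<theta>\<close> \<open>0 \<le> \<sigma>\<close>
      by (smt (verit) mult_mono mult_nonneg_nonneg mult_right_mono norm_ge_zero)
    have "norm (ip x y h - (norm x * norm y) *\<^sub>R c h) \<le> \<delta> * norm x * norm y * norm h"
      using onorm[OF bounded_linear_sub[OF ip_bounded_linear[of x y]
            bounded_linear_compose[OF bounded_linear_scaleR_right c]], of h] xy
      unfolding angle_rel_def by (meson mult_right_mono norm_ge_zero order_trans)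
    then show "norm (\<sigma>\<^sup>2 *\<^sub>R (ip x y h - (norm x * norm y) *\<^sub>R c h))
        \<le> \<sigma>\<^sup>2 * (\<delta> * norm x * norm y * norm h)"
      by (simp add: mult_left_mono)
    show "norm ((m - t) *\<^sub>R c h) \<le> \<bar>m - t\<bar> * (onorm c * norm h)"
      by (simp add: onorm[OF c] mult_left_mono)
  qed
  also have "\<dots> = ((\<theta>\<^sup>2 + 2 * \<theta> + \<delta>) * m + \<bar>m - t\<bar> * onorm c) * norm h"
    unfolding m_def by (simp add: power2_eq_square algebra_simps)
  finally show "norm (ip (T x) (T y) h - t *\<^sub>R c h)
      \<le> ((\<theta>\<^sup>2 + 2 * \<theta> + \<delta>) * m + \<bar>m - t\<bar> * onorm c) * norm h" .
qed

lemma angle_rel_perturbation: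
  fixes S T :: "'e \<Rightarrow> 'e"
  assumes S_ip: "\<And>x y. ip (S x) (S y) = (\<lambda>h. \<sigma>\<^sup>2 *\<^sub>R ip x y h)" and "0 \<le> \<sigma>"
    and close: "\<And>x. norm (T x - S x) \<le> \<theta> * \<sigma> * norm x"
    and c: "bounded_linear c" and \<theta>: "0 \<le> \<theta>" "\<theta> < 1" and "0 \<le> \<delta>"
    and xy: "angle_rel ip c \<delta> x y"
  shows "angle_rel ip c ((\<theta>\<^sup>2 + 2 * \<theta> + \<delta> + (\<theta>\<^sup>2 - 2 * \<theta> + 2) * onorm c) / (1 - \<theta>)\<^sup>2)
    (T x) (T y)"
proof -
  define m where "m = \<sigma>\<^sup>2 * norm x * norm y"
  define t where "t = norm (T x) * norm (T y)"
  have "norm (S z) = \<sigma> * norm z" for z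
    by (rule norm_eq_if_ip_scaled[OF S_ip \<open>0 \<le> \<sigma>\<close>])
  then have T_lower: "(1 - \<theta>) * \<sigma> * norm z \<le> norm (T z)" for z
    using norm_triangle_ineq4[of "T z" "T z - S z"] close[of z] by (simp add: algebra_simps)
  have "(1 - \<theta>)\<^sup>2 * m \<le> t"
    using mult_mono[OF T_lower[of x] T_lower[of y]] \<theta> \<open>0 \<le> \<sigma>\<close>
    unfolding m_def t_def by (simp add: power2_eq_square mult_ac)
  then have "(\<theta>\<^sup>2 + 2 * \<theta> + \<delta>) * m + \<bar>m - t\<bar> * onorm c
      \<le> ((\<theta>\<^sup>2 + 2 * \<theta> + \<delta> + (\<theta>\<^sup>2 - 2 * \<theta> + 2) * onorm c) / (1 - \<theta>)\<^sup>2) * t"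
    unfolding m_def using \<theta> \<open>0 \<le> \<delta>\<close> onorm_pos_le[OF c] \<open>0 \<le> \<sigma>\<close>
    by (intro angle_constant_bound) simp_all
  with onorm_ip_perturbation_le[OF S_ip \<open>0 \<le> \<sigma>\<close> close c \<open>0 \<le> \<theta>\<close> \<open>0 \<le> \<delta>\<close> xy]
  show ?thesis
    unfolding angle_rel_def m_def t_def by (simp add: mult.assoc)
qed

end

theorem theorem2p4:
  fixes A :: "('h::{complex_inner,complete_space} \<Rightarrow> 'h) set"
    and act :: "'e::{complex_vector,banach} \<Rightarrow> ('h \<Rightarrow> 'h) \<Rightarrow> 'e"
    and ip :: "'e \<Rightarrow> 'e \<Rightarrow> ('h \<Rightarrow> 'h)"
    and S T :: "'e \<Rightarrow> 'e"
    and c :: "'h \<Rightarrow> 'h"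
    and \<delta> \<theta> :: real
  assumes dimH: "\<exists>u v :: 'h. \<forall>a b. scaleC a u + scaleC b v = 0 \<longrightarrow> a = 0 \<and> b = 0"
    and A_cstar: "cstar_subalgebra A"
    and K_sub_A: "{f. compact_op f} \<subseteq> A"
    and A_sub_B: "A \<subseteq> {f. bounded_clinear f}"
    and E_module: "hilbert_module A act ip"
    and E_full: "full_module A ip"
    and S_bdd: "bounded_clinear S"
    and S_nonzero: "S \<noteq> (\<lambda>_. 0)"
    and S_abs: "\<forall>x y. op_abs (ip (S x) (S y)) = (\<lambda>h. (onorm S)\<^sup>2 *\<^sub>R op_abs (ip x y) h)"
    and c_in: "c \<in> A"
    and c_norm: "onorm c < 1"
    and \<delta>_range: "0 \<le> \<delta>" "\<delta> < 1 - onorm c"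
    and \<theta>_range: "0 \<le> \<theta>" "\<theta> < 1"
    and T_lin: "bounded_clinear T"
    and T_close: "onorm (\<lambda>x. T x - S x) \<le> \<theta> * onorm S"
  shows "angle_preserving ip \<delta>
           ((\<theta>\<^sup>2 + 2 * \<theta> + \<delta> + (\<theta>\<^sup>2 - 2 * \<theta> + 2) * onorm c) / (1 - \<theta>)\<^sup>2) c T"
proof -
  interpret operator_hilbert_module A act ip
    by (rule operator_hilbert_module.intro[OF E_module A_sub_B])
  have "ip (S z) (S z) = (\<lambda>h. (onorm S)\<^sup>2 *\<^sub>R ip z z h)" for z
    using S_abs op_abs_ip_self by metis
  then have S_ip: "ip (S x) (S y) = (\<lambda>h. (onorm S)\<^sup>2 *\<^sub>R ip x y h)" for x y
    by (rule ip_eq_scaleR_if_diagonal[OF S_bdd])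
  have "bounded_linear (\<lambda>x. T x - S x)"
    using bounded_clinear_imp_bounded_linear[OF T_lin] bounded_clinear_imp_bounded_linear[OF S_bdd]
    by (rule bounded_linear_sub)
  then have close: "norm (T x - S x) \<le> \<theta> * onorm S * norm x" for x
    using onorm[of "\<lambda>x. T x - S x" x] T_close by (meson mult_right_mono norm_ge_zero order_trans)
  have "bounded_linear c"
    using c_in A_sub_B bounded_clinear_imp_bounded_linear by blast
  then show ?thesis
    unfolding angle_preserving_def
    using angle_rel_perturbation[OF S_ip
        onorm_pos_le[OF bounded_clinear_imp_bounded_linear[OF S_bdd]] close _ \<theta>_range \<delta>_range(1)]
    by blast
qed

end
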